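(* Let a WIFS satisfy the $\Phi$-FNC for an iteration rule $\Phi$, with transition graph $\mathcal G$. Suppose every vertex of every non-essential loop class of $\mathcal G$ is a neighbour set of cardinality one. Then $\mathcal G$ is decomposable.
   Context: Setting. A weighted iterated function system (WIFS) $(S_i,p_i)_{i\in\mathcal I}$ consists of a finite index set $\mathcal I$, maps $S_i(x)=r_ix+d_i$ on $\mathbb R$ with $0<|r_i|<1$, and probabilities $p_i>0$ with $\sum_i p_i=1$. Its self-similar set $K$ is the unique nonempty compact set with $K=\bigcup_i S_i(K)$ and its self-similar measure $\mu$ is the unique Borel probability measure with $\mu(E)=\sum_i p_i\,\mu(S_i^{-1}(E))$. Standing assumptions: $K$ is not a singleton and its convex hull is $[0,1]$. For a finite word $\sigma=\sigma_1\cdots\sigma_n$ over $\mathcal I$ (the set of all finite words, including the empty word, is $\mathcal I^*$) put $S_\sigma=S_{\sigma_1}\circ\cdots\circ S_{\sigma_n}$, $p_\sigma=p_{\sigma_1}\cdots p_{\sigma_n}$ (identity and $1$ for the empty word). For a map $f$, $f\mu:=\mu\circ f^{-1}$. Iteration rules and net intervals. Fix a total order on the affine bijections $x\mapsto ax+b$ ($a\ne0$) of $\mathbb R$. For a closed interval $J$ let $T_J(x)=rx+c$ ($r>0$) be the map with $T_J([0,1])=J$. An iteration rule $\Phi$ assigns to each finite strictly increasing tuple $v=(f_1,\dots,f_m)$ of such maps a tuple $\Phi(v)=(\mathcal C_1,\dots,\mathcal C_m)$ of finite subsets of $\mathcal I^*$ such that for each $i$ and all large $n$ every word of length $n$ has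 a unique prefix in $\mathcal C_i$. Children of a pair $(\Delta,v)$, $\Delta=[a,b]$: let $\mathcal Y=\{T_\Delta\circ f_i\circ S_\tau:1\le i\le m,\tau\in\mathcal C_i\}$ and list $\{a,b\}\cup\{g(z):g\in\mathcal Y,z\in\{0,1\},g(z)\in\Delta\}$ as $a=y_1<\dots<y_{k+1}=b$; the children are the pairs $(\Delta',v')$ with $\Delta'=[y_j,y_{j+1}]$, $(y_j,y_{j+1})\cap K\ne\emptyset$, and $v'$ the increasing tuple of the distinct maps $T_{\Delta'}^{-1}\circ g$, $g\in\mathcal Y$, $g(K)\cap(y_j,y_{j+1})\ne\emptyset$. Let $\mathcal N_0=\{([0,1],(\mathrm{id}))\}$ and $\mathcal N_{n+1}$ the set of children of members of $\mathcal N_n$; second components are neighbour sets. $\Phi$ must also satisfy: (i) $\max\{r\,\mathrm{diam}\Delta:(\Delta,v)\in\mathcal N_n,(x\mapsto rx+c)\in v\}\to0$; (ii) if $f_1\neq f_2$ lie in a neighbour set then $f_1\circ S_\sigma\ne f_2$ for all $\sigma\in\mathcal I^*$. (Convention: a pair whose only child has the same interval is replaced by that child.) Transition graph. Children and their data depend only on $v$. The transition graph $\mathcal G$ has as vertices the neighbour sets occurring, root $v_{\mathrm{root}}=(\mathrm{id})$, and one edge $e$ from $v$ to $v'$ for each child $(\Delta',v')$ of a pair $(\Delta,v)$ (distinguished by the relative position of $\Delta'$ in $\Delta$), with transition matrix $T(e)$: for $v=(f_1,\dots,f_m)$, $v'=(g_1,\dots,g_n)$, $\Phi(v)=(\mathcal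 C_1,\dots,\mathcal C_m)$, $T(e)$ is the $m\times n$ matrix with $T(e)_{i,j}=\frac{f_i\mu((0,1))}{g_j\mu((0,1))}\sum p_\omega$ over $\omega\in\mathcal C_i$ with $T_\Delta\circ f_i\circ S_\omega=T_{\Delta'}\circ g_j$. For a path $\eta=(e_1,\dots,e_n)$, $T(\eta)=T(e_1)\cdots T(e_n)$ and $\|A\|$ = sum of entries. $\Omega^*$ is the set of finite paths starting at $v_{\mathrm{root}}$. The WIFS satisfies the $\Phi$-FNC if $\mathcal G$ is finite. A loop class is an induced subgraph $\mathcal L$ of $\mathcal G$ that is strongly connected, has at least one edge, and is maximal with these properties; it is essential if every vertex reachable by a directed path from a vertex of $\mathcal L$ lies in $\mathcal L$. Decomposability. A path with vertices $v_0,\dots,v_n$ is a transition path if $v_0$ lies in a loop class $\mathcal L_j$, $v_n$ in a loop class $\mathcal L_k$ with $k\ne j$, and $v_1,\dots,v_{n-1}$ lie in no loop class; it is an initial path if instead $v_0=v_{\mathrm{root}}$. Order the loop classes $\mathcal L_1,\dots,\mathcal L_m$ so that transition paths only go from $\mathcal L_i$ to $\mathcal L_j$ with $i<j$. Every $\eta\in\Omega^*$ is uniquely written $\eta=\phi\lambda_1\psi_1\cdots\psi_{m-1}\lambda_m$ with $\phi$ an initial path, $\lambda_i$ a path in $\mathcal L_i$, $\psi_i$ transition paths (all possibly empty); $\|T(\lambda_i)\|:=1$ for empty $\lambda_i$. $\mathcal G$ is decomposable if there is $C\ge1$, depending only on $\mathcal G$, with $C^{-1}\prod_i\|T(\lambda_i)\|\le\|T(\eta)\|\le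 C\prod_i\|T(\lambda_i)\|$ for all $\eta\in\Omega^*$. *)

theory Defs
  imports "HOL-Probability.Probability" "HOL-Library.Sublist"
begin

type_synonym amap = "real \<Rightarrow> real"
type_synonym npair = "(real \<times> real) \<times> amap set"   \<comment> \<open>(interval [a,b] as (a,b), neighbour set)\<close>
type_synonym mat = "amap \<Rightarrow> amap \<Rightarrow> real"       \<comment> \<open>matrix indexed by neighbour maps\<close>

definition amap :: "real \<Rightarrow> real \<Rightarrow> amap" where
  "amap a b = (\<lambda>x. a * x + b)"

definition affine_bij :: "amap set" where
  "affine_bij = {amap a b | a b. a \<noteq> 0}"

definition Smap :: "('i \<Rightarrow> real) \<Rightarrow> ('i \<Rightarrow> real) \<Rightarrow> 'i \<Rightarrow> amap" where
  "Smap r d i = amap (r i) (d i)"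

definition Sw :: "('i \<Rightarrow> real) \<Rightarrow> ('i \<Rightarrow> real) \<Rightarrow> 'i list \<Rightarrow> amap" where
  "Sw r d w = foldr (\<lambda>i f. Smap r d i \<circ> f) w id"

definition pw :: "('i \<Rightarrow> real) \<Rightarrow> 'i list \<Rightarrow> real" where
  "pw p w = prod_list (map p w)"

definition Tint :: "real \<times> real \<Rightarrow> amap" where
  "Tint J = amap (snd J - fst J) (fst J)"

definition Tinv :: "real \<times> real \<Rightarrow> amap" where
  "Tinv J = amap (1 / (snd J - fst J)) (- fst J / (snd J - fst J))"

definition Ymaps :: "('i \<Rightarrow> real) \<Rightarrow> ('i \<Rightarrow> real) \<Rightarrow> (amap set \<Rightarrow> amap \<Rightarrow> 'i list set)
    \<Rightarrow> real \<times> real \<Rightarrow> amap set \<Rightarrow> amap set" where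
  "Ymaps r d \<Phi> \<Delta> v = {Tint \<Delta> \<circ> f \<circ> Sw r d \<tau> | f \<tau>. f \<in> v \<and> \<tau> \<in> \<Phi> v f}"

definition cutpts :: "('i \<Rightarrow> real) \<Rightarrow> ('i \<Rightarrow> real) \<Rightarrow> (amap set \<Rightarrow> amap \<Rightarrow> 'i list set)
    \<Rightarrow> real \<times> real \<Rightarrow> amap set \<Rightarrow> real set" where
  "cutpts r d \<Phi> \<Delta> v = {fst \<Delta>, snd \<Delta>} \<union>
     {g z | g z. g \<in> Ymaps r d \<Phi> \<Delta> v \<and> z \<in> {0, 1} \<and> g z \<in> {fst \<Delta>..snd \<Delta>}}"

text \<open>Children before applying the replacement convention.\<close>
definition rchildren :: "('i \<Rightarrow> real) \<Rightarrow> ('i \<Rightarrow> real) \<Rightarrow> (amap set \<Rightarrow> amap \<Rightarrow> 'i list set)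
    \<Rightarrow> real set \<Rightarrow> npair \<Rightarrow> npair set" where
  "rchildren r d \<Phi> K c =
     {((y, y'), {Tinv (y, y') \<circ> g | g. g \<in> Ymaps r d \<Phi> (fst c) (snd c) \<and> g ` K \<inter> {y<..<y'} \<noteq> {}})
      | y y'. y \<in> cutpts r d \<Phi> (fst c) (snd c) \<and> y' \<in> cutpts r d \<Phi> (fst c) (snd c) \<and> y < y'
        \<and> {y<..<y'} \<inter> cutpts r d \<Phi> (fst c) (snd c) = {} \<and> {y<..<y'} \<inter> K \<noteq> {}}"

text \<open>Convention: a pair whose only child has the same interval is replaced by that child.\<close>
definition same_step :: "('i \<Rightarrow> real) \<Rightarrow> ('i \<Rightarrow> real) \<Rightarrow> (amap set \<Rightarrow> amap \<Rightarrow> 'i list set)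
    \<Rightarrow> real set \<Rightarrow> npair \<Rightarrow> npair \<Rightarrow> bool" where
  "same_step r d \<Phi> K c c' \<longleftrightarrow> rchildren r d \<Phi> K c = {c'} \<and> fst c' = fst c"

definition is_chain :: "('i \<Rightarrow> real) \<Rightarrow> ('i \<Rightarrow> real) \<Rightarrow> (amap set \<Rightarrow> amap \<Rightarrow> 'i list set)
    \<Rightarrow> real set \<Rightarrow> npair list \<Rightarrow> bool" where
  "is_chain r d \<Phi> K ch \<longleftrightarrow> ch \<noteq> [] \<and>
     (\<forall>i. Suc i < length ch \<longrightarrow> same_step r d \<Phi> K (ch ! i) (ch ! Suc i)) \<and>
     \<not> (\<exists>c'. same_step r d \<Phi> K (last ch) c')"

definition children :: "('i \<Rightarrow> real) \<Rightarrow> ('i \<Rightarrow> real) \<Rightarrow> (amap set \<Rightarrow> amap \<Rightarrow> 'i list set)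
    \<Rightarrow> real set \<Rightarrow> npair \<Rightarrow> npair set" where
  "children r d \<Phi> K c = {last ch | ch. is_chain r d \<Phi> K ch \<and> hd ch \<in> rchildren r d \<Phi> K c}"

primrec gen :: "('i \<Rightarrow> real) \<Rightarrow> ('i \<Rightarrow> real) \<Rightarrow> (amap set \<Rightarrow> amap \<Rightarrow> 'i list set)
    \<Rightarrow> real set \<Rightarrow> nat \<Rightarrow> npair set" where
  "gen r d \<Phi> K 0 = {((0, 1), {id})}"
| "gen r d \<Phi> K (Suc n) = (\<Union>c \<in> gen r d \<Phi> K n. children r d \<Phi> K c)"

definition iteration_rule :: "'i set \<Rightarrow> ('i \<Rightarrow> real) \<Rightarrow> ('i \<Rightarrow> real) \<Rightarrow> real set
    \<Rightarrow> (amap set \<Rightarrow> amap \<Rightarrow> 'i list set) \<Rightarrow> bool" where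
  "iteration_rule I r d K \<Phi> \<longleftrightarrow>
     (\<forall>v f. finite v \<and> v \<subseteq> affine_bij \<and> f \<in> v \<longrightarrow>
        finite (\<Phi> v f) \<and> \<Phi> v f \<subseteq> lists I \<and>
        (\<exists>N. \<forall>n\<ge>N. \<forall>w \<in> lists I. length w = n \<longrightarrow> (\<exists>!u. u \<in> \<Phi> v f \<and> prefix u w))) \<and>
     \<comment> \<open>(i): max of |slope f| * diam Delta over N_n tends to 0\<close>
     (\<forall>\<epsilon>>0. \<exists>N. \<forall>n\<ge>N. \<forall>c \<in> gen r d \<Phi> K n. \<forall>f \<in> snd c.
        \<bar>f 1 - f 0\<bar> * (snd (fst c) - fst (fst c)) < \<epsilon>) \<and>
     \<comment> \<open>(ii)\<close>
     (\<forall>n. \<forall>c \<in> gen r d \<Phi> K n. \<forall>f1 \<in> snd c. \<forall>f2 \<in> snd c. f1 \<noteq> f2 \<longrightarrow>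
        (\<forall>\<sigma> \<in> lists I. f1 \<circ> Sw r d \<sigma> \<noteq> f2))"

definition idm :: mat where
  "idm = (\<lambda>f g. if f = g then 1 else 0)"

definition mmul :: "amap set \<Rightarrow> mat \<Rightarrow> mat \<Rightarrow> mat" where
  "mmul V A B = (\<lambda>f h. \<Sum>g\<in>V. A f g * B g h)"

definition rawmat :: "real measure \<Rightarrow> ('i \<Rightarrow> real) \<Rightarrow> ('i \<Rightarrow> real) \<Rightarrow> ('i \<Rightarrow> real)
    \<Rightarrow> (amap set \<Rightarrow> amap \<Rightarrow> 'i list set) \<Rightarrow> npair \<Rightarrow> npair \<Rightarrow> mat" where
  "rawmat \<mu> p r d \<Phi> c c' = (\<lambda>f g.
     if f \<in> snd c \<and> g \<in> snd c' then
       measure \<mu> (f -` {0<..<1}) / measure \<mu> (g -` {0<..<1}) *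
       (\<Sum>\<omega> \<in> {\<omega> \<in> \<Phi> (snd c) f. Tint (fst c) \<circ> f \<circ> Sw r d \<omega> = Tint (fst c') \<circ> g}. pw p \<omega>)
     else 0)"

primrec chainmat :: "real measure \<Rightarrow> ('i \<Rightarrow> real) \<Rightarrow> ('i \<Rightarrow> real) \<Rightarrow> ('i \<Rightarrow> real)
    \<Rightarrow> (amap set \<Rightarrow> amap \<Rightarrow> 'i list set) \<Rightarrow> npair \<Rightarrow> npair list \<Rightarrow> mat" where
  "chainmat \<mu> p r d \<Phi> c [] = idm"
| "chainmat \<mu> p r d \<Phi> c (c' # cs) = mmul (snd c') (rawmat \<mu> p r d \<Phi> c c') (chainmat \<mu> p r d \<Phi> c' cs)"

definition relpos :: "real \<times> real \<Rightarrow> real \<times> real \<Rightarrow> real \<times> real" where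
  "relpos \<Delta> \<Delta>' = ((fst \<Delta>' - fst \<Delta>) / (snd \<Delta> - fst \<Delta>), (snd \<Delta>' - fst \<Delta>) / (snd \<Delta> - fst \<Delta>))"

text \<open>Edges: (source, relative position of the child interval, target, transition matrix).\<close>
type_synonym tedge = "amap set \<times> (real \<times> real) \<times> amap set \<times> mat"

definition esrc :: "tedge \<Rightarrow> amap set" where "esrc e = fst e"
definition etgt :: "tedge \<Rightarrow> amap set" where "etgt e = fst (snd (snd e))"
definition emat :: "tedge \<Rightarrow> mat" where "emat e = snd (snd (snd e))"

definition tverts :: "('i \<Rightarrow> real) \<Rightarrow> ('i \<Rightarrow> real) \<Rightarrow> (amap set \<Rightarrow> amap \<Rightarrow> 'i list set)
    \<Rightarrow> real set \<Rightarrow> amap set set" where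
  "tverts r d \<Phi> K = {snd c | n c. c \<in> gen r d \<Phi> K n}"

definition tedges :: "real measure \<Rightarrow> ('i \<Rightarrow> real) \<Rightarrow> ('i \<Rightarrow> real) \<Rightarrow> ('i \<Rightarrow> real)
    \<Rightarrow> (amap set \<Rightarrow> amap \<Rightarrow> 'i list set) \<Rightarrow> real set \<Rightarrow> tedge set" where
  "tedges \<mu> p r d \<Phi> K =
     {(snd c, relpos (fst c) (fst (last ch)), snd (last ch),
       (\<lambda>f g. if f \<in> snd c \<and> g \<in> snd (last ch) then chainmat \<mu> p r d \<Phi> c ch f g else 0))
      | n c ch. c \<in> gen r d \<Phi> K n \<and> is_chain r d \<Phi> K ch \<and> hd ch \<in> rchildren r d \<Phi> K c}"

definition is_path :: "tedge set \<Rightarrow> tedge list \<Rightarrow> bool" where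
  "is_path E es \<longleftrightarrow> set es \<subseteq> E \<and> (\<forall>i. Suc i < length es \<longrightarrow> etgt (es ! i) = esrc (es ! Suc i))"

definition Omega :: "tedge set \<Rightarrow> tedge list set" where
  "Omega E = {es. is_path E es \<and> (es \<noteq> [] \<longrightarrow> esrc (hd es) = {id})}"

primrec pathmat :: "tedge list \<Rightarrow> mat" where
  "pathmat [] = idm"
| "pathmat (e # es) = mmul (etgt e) (emat e) (pathmat es)"

definition pnorm :: "tedge list \<Rightarrow> real" where
  "pnorm es = (if es = [] then 1 else
     (\<Sum>f \<in> esrc (hd es). \<Sum>g \<in> etgt (last es). pathmat es f g))"

definition eadj :: "tedge set \<Rightarrow> amap set set \<Rightarrow> (amap set \<times> amap set) set" where
  "eadj E L = {(esrc e, etgt e) | e. e \<in> E \<and> esrc e \<in> L \<and> etgt e \<in> L}"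

definition strongly_conn :: "tedge set \<Rightarrow> amap set set \<Rightarrow> bool" where
  "strongly_conn E L \<longleftrightarrow> (\<forall>u\<in>L. \<forall>w\<in>L. (u, w) \<in> (eadj E L)\<^sup>*)"

definition has_edge_in :: "tedge set \<Rightarrow> amap set set \<Rightarrow> bool" where
  "has_edge_in E L \<longleftrightarrow> (\<exists>e\<in>E. esrc e \<in> L \<and> etgt e \<in> L)"

definition loop_class :: "amap set set \<Rightarrow> tedge set \<Rightarrow> amap set set \<Rightarrow> bool" where
  "loop_class V E L \<longleftrightarrow> L \<subseteq> V \<and> strongly_conn E L \<and> has_edge_in E L \<and>
     (\<forall>L'. L \<subset> L' \<and> L' \<subseteq> V \<longrightarrow> \<not> (strongly_conn E L' \<and> has_edge_in E L'))"

definition essential :: "amap set set \<Rightarrow> tedge set \<Rightarrow> amap set set \<Rightarrow> bool" where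
  "essential V E L \<longleftrightarrow> (\<forall>u\<in>L. \<forall>w. (u, w) \<in> (eadj E V)\<^sup>* \<longrightarrow> w \<in> L)"

definition piece :: "amap set set \<Rightarrow> tedge list \<Rightarrow> tedge list" where
  "piece L es = filter (\<lambda>e. esrc e \<in> L \<and> etgt e \<in> L) es"

definition decomposable :: "amap set set \<Rightarrow> tedge set \<Rightarrow> bool" where
  "decomposable V E \<longleftrightarrow> (\<exists>C\<ge>1. \<forall>\<eta> \<in> Omega E.
     (\<Prod>L \<in> {L. loop_class V E L}. pnorm (piece L \<eta>)) / C \<le> pnorm \<eta> \<and>
     pnorm \<eta> \<le> C * (\<Prod>L \<in> {L. loop_class V E L}. pnorm (piece L \<eta>)))"

definition Phi_FNC :: "real measure \<Rightarrow> ('i \<Rightarrow> real) \<Rightarrow> ('i \<Rightarrow> real) \<Rightarrow> ('i \<Rightarrow> real)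
    \<Rightarrow> (amap set \<Rightarrow> amap \<Rightarrow> 'i list set) \<Rightarrow> real set \<Rightarrow> bool" where
  "Phi_FNC \<mu> p r d \<Phi> K \<longleftrightarrow> finite (tverts r d \<Phi> K) \<and> finite (tedges \<mu> p r d \<Phi> K)"

end

theory Submission
  imports Defs
begin

text \<open>
  Let \<open>x(\<eta>) = 1 T(\<eta>)\<close> be the row vector of column sums of \<open>T(\<eta>)\<close>, so that \<open>\<parallel>T(\<eta>)\<parallel>\<close> is
  the sum of its entries, and follow \<open>x(\<eta>)\<close> edge by edge along a path from the root.
  An edge inside a non-essential loop class joins singleton neighbour sets, so its transition
  matrix is a scalar, which multiplies \<open>x(\<eta>)\<close> and \<open>\<parallel>T(\<lambda>\<^sub>i)\<parallel>\<close> alike.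
  An edge outside all loop classes changes the entries of \<open>x(\<eta>)\<close> by a factor between the least
  and the largest column sum of a transition matrix, and a path contains at most \<open>#V\<close> such
  edges, because it never returns to the source of one. Once the path enters an essential
  class it stays there, and from then on \<open>x(\<eta>)\<close> is comparable, entry by entry, to the row
  vector of the piece in that class times the norms of the earlier pieces. The column sums are
  positive because the self-similar measure charges every open set meeting \<open>K\<close>.
\<close>

lemma mmul_nonneg:
  assumes "\<And>f g. 0 \<le> A f g" and "\<And>g h. 0 \<le> B g h"
  shows "0 \<le> mmul V A B f h"
  using assms by (simp add: mmul_def sum_nonneg)

lemma mmul_pos:
  assumes "finite V" and "g \<in> V" and "\<And>f g. 0 \<le> A f g" and "\<And>g h. 0 \<le> B g h"
    and "0 < A f g" and "0 < B g h"
  shows "0 < mmul V A B f h"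
proof -
  have "0 < A f g * B g h" using assms by simp
  also have "\<dots> \<le> mmul V A B f h"
    unfolding mmul_def using assms by (intro member_le_sum) auto
  finally show ?thesis .
qed

lemma idm_nonneg: "0 \<le> idm f g"
  by (simp add: idm_def)

lemma pathmat_nonneg: "(\<And>e f g. e \<in> set es \<Longrightarrow> 0 \<le> emat e f g) \<Longrightarrow> 0 \<le> pathmat es f g"
  by (induction es arbitrary: f g) (auto simp: idm_nonneg intro!: mmul_nonneg)

definition in_class :: "amap set set \<Rightarrow> tedge \<Rightarrow> bool" where
  "in_class L e \<longleftrightarrow> esrc e \<in> L \<and> etgt e \<in> L"

lemma piece_eq_filter: "piece L es = filter (in_class L) es"
  by (simp add: piece_def in_class_def[abs_def])

lemma last_filter: "xs \<noteq> [] \<Longrightarrow> P (last xs) \<Longrightarrow> last (filter P xs) = last xs"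
  by (induction xs rule: rev_induct) auto

lemma eadj_iff: "(a, b) \<in> eadj E L \<longleftrightarrow> (\<exists>e\<in>E. esrc e = a \<and> etgt e = b \<and> a \<in> L \<and> b \<in> L)"
  unfolding eadj_def by blast

lemma is_path_snoc:
  "is_path E (es @ [e]) \<longleftrightarrow> is_path E es \<and> e \<in> E \<and> (es \<noteq> [] \<longrightarrow> etgt (last es) = esrc e)"
  unfolding is_path_def
  by (cases es rule: rev_cases) (auto simp: nth_append less_Suc_eq)

definition end_vertex :: "tedge list \<Rightarrow> amap set" where
  "end_vertex es = (if es = [] then {id} else etgt (last es))"

lemma end_vertex_snoc [simp]: "end_vertex (es @ [e]) = etgt e"
  by (simp add: end_vertex_def)

lemma Omega_edges: "es \<in> Omega E \<Longrightarrow> set es \<subseteq> E"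
  by (simp add: Omega_def is_path_def)

lemma Omega_snoc: "es @ [e] \<in> Omega E \<longleftrightarrow> es \<in> Omega E \<and> e \<in> E \<and> end_vertex es = esrc e"
proof (cases "es = []")
  case True
  then show ?thesis by (auto simp: Omega_def is_path_def end_vertex_def)
next
  case False
  then show ?thesis by (auto simp: Omega_def is_path_snoc end_vertex_def)
qed

section \<open>Loop classes of a finite graph\<close>

locale finite_graph =
  fixes V :: "amap set set" and E :: "tedge set"
  assumes finite_vertices: "finite V"
    and edge_vertices: "e \<in> E \<Longrightarrow> esrc e \<in> V \<and> etgt e \<in> V"
begin

abbreviation adj :: "(amap set \<times> amap set) set" where
  "adj \<equiv> eadj E V"

lemma edge_adj: "e \<in> E \<Longrightarrow> (esrc e, etgt e) \<in> adj"
  using edge_vertices by (auto simp: eadj_iff)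

lemma reach_vertex: "(a, b) \<in> adj\<^sup>* \<Longrightarrow> a \<in> V \<Longrightarrow> b \<in> V"
  by (induction rule: rtrancl_induct) (auto simp: eadj_iff)

lemma eadj_rtrancl_mono: "L \<subseteq> V \<Longrightarrow> (eadj E L)\<^sup>* \<subseteq> adj\<^sup>*"
  unfolding eadj_def by (intro rtrancl_mono) blast

definition scc :: "amap set \<Rightarrow> amap set set" where
  "scc a = {z \<in> V. (a, z) \<in> adj\<^sup>* \<and> (z, a) \<in> adj\<^sup>*}"

lemma strongly_conn_scc: "strongly_conn E (scc a)"
proof -
  have "(u, z) \<in> (eadj E (scc a))\<^sup>*" if "(u, z) \<in> adj\<^sup>*" "u \<in> scc a" "z \<in> scc a" for u z
    using that
  proof (induction rule: rtrancl_induct)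
    case (step y z)
    have "y \<in> V"
      using step.hyps(2) by (auto simp: eadj_iff)
    moreover have "(a, y) \<in> adj\<^sup>*" and "(y, a) \<in> adj\<^sup>*"
      using step by (auto simp: scc_def intro: rtrancl_trans)
    ultimately have "y \<in> scc a"
      by (simp add: scc_def)
    then have "(y, z) \<in> eadj E (scc a)"
      using step.hyps(2) step.prems(2) unfolding eadj_def by blast
    then show ?case
      using step.IH[OF step.prems(1) \<open>y \<in> scc a\<close>] by simp
  qed simp
  then show ?thesis
    unfolding strongly_conn_def scc_def by (blast intro: rtrancl_trans)
qed

lemma strongly_conn_subset_scc:
  assumes "L \<subseteq> V" and "strongly_conn E L" and "a \<in> L"
  shows "L \<subseteq> scc a"
  using assms eadj_rtrancl_mono[OF assms(1)] by (auto simp: strongly_conn_def scc_def)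

lemma loop_class_eq_scc:
  assumes L: "loop_class V E L" and "a \<in> L"
  shows "L = scc a"
proof -
  have "L \<subseteq> scc a"
    using L assms(2) by (intro strongly_conn_subset_scc) (auto simp: loop_class_def)
  moreover have "has_edge_in E (scc a)"
    using L \<open>L \<subseteq> scc a\<close> by (auto simp: loop_class_def has_edge_in_def)
  ultimately show ?thesis
    using L strongly_conn_scc by (auto simp: loop_class_def scc_def)
qed

lemma loop_class_unique: "loop_class V E L \<Longrightarrow> loop_class V E L' \<Longrightarrow> v \<in> L \<Longrightarrow> v \<in> L' \<Longrightarrow> L = L'"
  using loop_class_eq_scc by metis

lemma loop_class_convex:
  assumes "loop_class V E L" and "a \<in> L" and "b \<in> L"
    and "(a, z) \<in> adj\<^sup>*" and "(z, b) \<in> adj\<^sup>*"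
  shows "z \<in> L"
proof -
  have L: "L = scc a"
    using assms(1,2) by (rule loop_class_eq_scc)
  have "z \<in> V"
    using assms(1,2,4) reach_vertex by (auto simp: loop_class_def)
  moreover have "(b, a) \<in> adj\<^sup>*"
    using assms(3) L by (simp add: scc_def)
  ultimately show ?thesis
    using assms(4,5) L by (auto simp: scc_def intro: rtrancl_trans)
qed

lemma loop_class_of_cycle:
  assumes e: "e \<in> E" and cycle: "(etgt e, esrc e) \<in> adj\<^sup>*"
  shows "loop_class V E (scc (esrc e))" and "in_class (scc (esrc e)) e"
proof -
  show edge_in: "in_class (scc (esrc e)) e"
    using e cycle edge_vertices edge_adj[OF e] by (auto simp: in_class_def scc_def)
  have "\<not> (scc (esrc e) \<subset> L' \<and> strongly_conn E L')" if "L' \<subseteq> V" for L'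
    using strongly_conn_subset_scc[OF that] edge_in by (auto simp: in_class_def)
  then show "loop_class V E (scc (esrc e))"
    using e edge_in strongly_conn_scc
    by (auto simp: loop_class_def has_edge_in_def in_class_def scc_def)
qed

lemma essential_class_edge:
  "essential V E L \<Longrightarrow> e \<in> E \<Longrightarrow> esrc e \<in> L \<Longrightarrow> in_class L e"
  using edge_adj[of e] by (auto simp: essential_def in_class_def)

lemma reach_along_path:
  assumes "is_path E es" and "e' \<in> set es"
  shows "(esrc e', esrc (last es)) \<in> adj\<^sup>* \<and> (etgt e', etgt (last es)) \<in> adj\<^sup>*"
  using assms
proof (induction es rule: rev_induct)
  case (snoc e es)
  show ?case
  proof (cases "e' = e")
    case False
    then have "e' \<in> set es" and "es \<noteq> []"
      using snoc.prems by auto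
    moreover have "(esrc (last es), etgt (last es)) \<in> adj"
      using snoc.prems \<open>es \<noteq> []\<close> by (intro edge_adj) (auto simp: is_path_def)
    moreover have "(etgt (last es), etgt e) \<in> adj"
      using snoc.prems \<open>es \<noteq> []\<close> edge_adj by (auto simp: is_path_snoc)
    ultimately show ?thesis
      using snoc is_path_snoc by (auto intro: rtrancl_into_rtrancl)
  qed simp
qed simp

definition transition_edge :: "tedge \<Rightarrow> bool" where
  "transition_edge e \<longleftrightarrow> \<not> (\<exists>L. loop_class V E L \<and> in_class L e)"

definition transitions :: "tedge list \<Rightarrow> nat" where
  "transitions es = length (filter transition_edge es)"

lemma distinct_transition_sources: "is_path E es \<Longrightarrow> distinct (map esrc (filter transition_edge es))"
proof (induction es rule: rev_induct)
  case (snoc e es)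
  have "esrc e \<notin> esrc ` set (filter transition_edge es)" if "transition_edge e"
  proof
    assume "esrc e \<in> esrc ` set (filter transition_edge es)"
    then obtain e' where e': "e' \<in> set es" "transition_edge e'" "esrc e' = esrc e"
      by auto
    then have "(etgt e', esrc e') \<in> adj\<^sup>*"
      using snoc.prems reach_along_path[of es e'] by (auto simp: is_path_snoc)
    then show False
      using e'(1,2) snoc.prems loop_class_of_cycle[of e'] by (auto simp: transition_edge_def is_path_def)
  qed
  then show ?case
    using snoc by (simp add: is_path_snoc)
qed simp

lemma transitions_le_card: "is_path E es \<Longrightarrow> transitions es \<le> card V"
proof -
  assume path: "is_path E es"
  have "transitions es = card (set (map esrc (filter transition_edge es)))"
    using distinct_card[OF distinct_transition_sources[OF path]] by (simp add: transitions_def)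
  also have "\<dots> \<le> card V"
    using path edge_vertices finite_vertices by (intro card_mono) (auto simp: is_path_def)
  finally show ?thesis .
qed

lemma last_in_class:
  assumes "is_path E (es @ [e])" and "loop_class V E L" and "in_class L e"
    and "e' \<in> set es" and "in_class L e'"
  shows "in_class L (last es)"
proof -
  have "es \<noteq> []"
    using assms(4) by auto
  then have tgt: "etgt (last es) = esrc e" and "last es \<in> E"
    using assms(1) by (simp_all add: is_path_snoc) (auto simp: is_path_def)
  have "(esrc e', esrc (last es)) \<in> adj\<^sup>*"
    using assms(1,4) reach_along_path by (auto simp: is_path_snoc)
  moreover have "(esrc (last es), esrc e) \<in> adj\<^sup>*"
    using edge_adj[OF \<open>last es \<in> E\<close>] tgt by auto
  ultimately have "esrc (last es) \<in> L"
    using loop_class_convex[OF assms(2)] assms(3,5) by (auto simp: in_class_def)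
  then show ?thesis
    using tgt assms(3) by (simp add: in_class_def)
qed

end

section \<open>Decomposability of weighted graphs\<close>

lemma sum_mult_bounds:
  fixes x y w :: "'a \<Rightarrow> real"
  assumes "\<And>g. g \<in> A \<Longrightarrow> x g \<in> {a * y g..b * y g}" and "\<And>g. g \<in> A \<Longrightarrow> 0 \<le> w g"
  shows "(\<Sum>g\<in>A. x g * w g) \<in> {a * (\<Sum>g\<in>A. y g * w g)..b * (\<Sum>g\<in>A. y g * w g)}"
proof -
  have "a * (\<Sum>g\<in>A. y g * w g) \<le> (\<Sum>g\<in>A. x g * w g)"
    unfolding sum_distrib_left mult.assoc[symmetric] using assms by (intro sum_mono mult_right_mono) auto
  moreover have "(\<Sum>g\<in>A. x g * w g) \<le> b * (\<Sum>g\<in>A. y g * w g)"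
    unfolding sum_distrib_left mult.assoc[symmetric] using assms by (intro sum_mono mult_right_mono) auto
  ultimately show ?thesis by simp
qed

definition colsum :: "tedge \<Rightarrow> amap \<Rightarrow> real" where
  "colsum e g = (\<Sum>f\<in>esrc e. emat e f g)"

text \<open>The row vector \<open>1 T(\<eta>)\<close>, except that for the empty path it is the all-ones vector, so
  that \<open>rowvec_snoc\<close> also covers paths of length one.\<close>
definition rowvec :: "tedge list \<Rightarrow> amap \<Rightarrow> real" where
  "rowvec es g = (if es = [] then 1 else (\<Sum>f\<in>esrc (hd es). pathmat es f g))"

locale weighted_graph = finite_graph +
  assumes finite_edges: "finite E"
    and finite_vertex: "v \<in> V \<Longrightarrow> finite v"
    and nonempty_vertex: "v \<in> V \<Longrightarrow> v \<noteq> {}"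
    and emat_nonneg: "e \<in> E \<Longrightarrow> 0 \<le> emat e f g"
    and emat_support: "e \<in> E \<Longrightarrow> emat e f g \<noteq> 0 \<Longrightarrow> f \<in> esrc e \<and> g \<in> etgt e"
    and colsum_pos: "e \<in> E \<Longrightarrow> g \<in> etgt e \<Longrightarrow> 0 < colsum e g"
begin

lemma pathmat_single: "e \<in> E \<Longrightarrow> pathmat [e] f h = emat e f h"
  using emat_support[of e f h] edge_vertices[of e] finite_vertex
  by (auto simp: mmul_def idm_def if_distrib cong: if_cong)

lemma pathmat_append:
  assumes "set xs \<subseteq> E" and "xs \<noteq> []"
  shows "pathmat (xs @ ys) f h = (\<Sum>g\<in>etgt (last xs). pathmat xs f g * pathmat ys g h)"
  using assms
proof (induction xs arbitrary: f)
  case (Cons a xs)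
  show ?case
  proof (cases "xs = []")
    case True
    then show ?thesis
      using Cons.prems pathmat_single[of a] by (simp add: mmul_def)
  next
    case False
    have "pathmat ((a # xs) @ ys) f h
        = (\<Sum>g\<in>etgt a. \<Sum>k\<in>etgt (last xs). emat a f g * (pathmat xs g k * pathmat ys k h))"
      using Cons False by (simp add: mmul_def sum_distrib_left)
    also have "\<dots> = (\<Sum>k\<in>etgt (last xs). (\<Sum>g\<in>etgt a. emat a f g * pathmat xs g k) * pathmat ys k h)"
      by (subst sum.swap) (simp add: sum_distrib_right mult.assoc)
    finally show ?thesis
      using False by (simp add: mmul_def)
  qed
qed simp

lemma rowvec_snoc:
  assumes "set es \<subseteq> E" and "e \<in> E" and "es = [] \<or> etgt (last es) = esrc e"
  shows "rowvec (es @ [e]) h = (\<Sum>g\<in>esrc e. rowvec es g * emat e g h)"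
proof (cases "es = []")
  case True
  then show ?thesis
    using pathmat_single[OF assms(2)] by (simp add: rowvec_def)
next
  case False
  then have "rowvec (es @ [e]) h = (\<Sum>f\<in>esrc (hd es). \<Sum>g\<in>esrc e. pathmat es f g * emat e g h)"
    using assms pathmat_append[of es "[e]"] pathmat_single by (simp add: rowvec_def)
  also have "\<dots> = (\<Sum>g\<in>esrc e. rowvec es g * emat e g h)"
    using False by (simp add: rowvec_def sum_distrib_right sum.swap[of _ "esrc (hd es)"])
  finally show ?thesis .
qed

lemma pnorm_eq_sum_rowvec: "es \<noteq> [] \<Longrightarrow> pnorm es = (\<Sum>g\<in>etgt (last es). rowvec es g)"
  by (simp add: pnorm_def rowvec_def sum.swap[of _ "esrc (hd es)"])

lemma rowvec_nonneg: "set es \<subseteq> E \<Longrightarrow> 0 \<le> rowvec es g"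
  using emat_nonneg by (auto simp: rowvec_def intro!: sum_nonneg pathmat_nonneg)

lemma pnorm_nonneg: "set es \<subseteq> E \<Longrightarrow> 0 \<le> pnorm es"
  using emat_nonneg by (auto simp: pnorm_def intro!: sum_nonneg pathmat_nonneg)

lemma pnorm_eq_rowvec_singleton:
  "es = [] \<or> etgt (last es) = {u} \<Longrightarrow> pnorm es = rowvec es u"
  by (auto simp: pnorm_def rowvec_def)

definition min_colsum :: real where
  "min_colsum = Min (insert 1 ((\<lambda>(e, g). colsum e g) ` (SIGMA e:E. etgt e)))"

definition max_colsum :: real where
  "max_colsum = Max (insert 1 ((\<lambda>(e, g). colsum e g) ` (SIGMA e:E. etgt e)))"

definition max_card :: nat where
  "max_card = Max (insert 1 (card ` V))"

lemma finite_colsums: "finite ((\<lambda>(e, g). colsum e g) ` (SIGMA e:E. etgt e))"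
  using finite_edges edge_vertices finite_vertex by auto

lemma min_colsum_pos: "0 < min_colsum"
  using finite_colsums colsum_pos by (auto simp: min_colsum_def)

lemma min_colsum_le_1: "min_colsum \<le> 1"
  using finite_colsums by (simp add: min_colsum_def)

lemma one_le_max_colsum: "1 \<le> max_colsum"
  using finite_colsums by (simp add: max_colsum_def)

lemma colsum_bounds: "e \<in> E \<Longrightarrow> g \<in> etgt e \<Longrightarrow> colsum e g \<in> {min_colsum..max_colsum}"
  using finite_colsums by (auto simp: min_colsum_def max_colsum_def intro!: Min_le Max_ge)

lemma card_le_max_card: "v \<in> V \<Longrightarrow> card v \<le> max_card"
  using finite_vertices by (simp add: max_card_def)

lemma one_le_max_card: "1 \<le> max_card"
  using finite_vertices by (simp add: max_card_def)

definition class_prod :: "tedge list \<Rightarrow> real" where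
  "class_prod es = (\<Prod>L\<in>{L. loop_class V E L}. pnorm (piece L es))"

definition class_prod_except :: "amap set set \<Rightarrow> tedge list \<Rightarrow> real" where
  "class_prod_except L es = (\<Prod>L'\<in>{L. loop_class V E L} - {L}. pnorm (piece L' es))"

lemma finite_loop_classes: "finite {L. loop_class V E L}"
  by (rule finite_subset[of _ "Pow V"]) (auto simp: loop_class_def finite_vertices)

lemma class_prod_split: "loop_class V E L \<Longrightarrow> class_prod es = pnorm (piece L es) * class_prod_except L es"
  unfolding class_prod_def class_prod_except_def using finite_loop_classes by (simp add: prod.remove)

lemma class_prod_nonneg: "set es \<subseteq> E \<Longrightarrow> 0 \<le> class_prod es"
  unfolding class_prod_def piece_def by (auto intro!: prod_nonneg pnorm_nonneg)

lemma class_prod_except_snoc: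
  assumes "loop_class V E L" and "in_class L e"
  shows "class_prod_except L (es @ [e]) = class_prod_except L es"
proof -
  have "\<not> in_class L' e" if "loop_class V E L'" "L' \<noteq> L" for L'
    using that assms loop_class_unique by (auto simp: in_class_def)
  then show ?thesis
    unfolding class_prod_except_def by (intro prod.cong) (auto simp: piece_eq_filter)
qed

lemma class_prod_snoc_transition: "transition_edge e \<Longrightarrow> class_prod (es @ [e]) = class_prod es"
  unfolding class_prod_def by (intro prod.cong) (auto simp: piece_eq_filter transition_edge_def)

definition essential_edge :: "tedge \<Rightarrow> bool" where
  "essential_edge e \<longleftrightarrow> (\<exists>L. loop_class V E L \<and> essential V E L \<and> in_class L e)"

definition nonessential_bounds :: "tedge list \<Rightarrow> bool" where
  "nonessential_bounds es \<longleftrightarrow> (\<forall>e\<in>set es. \<not> essential_edge e) \<and>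
     (\<forall>g\<in>end_vertex es. rowvec es g \<in>
        {min_colsum ^ transitions es * class_prod es..max_colsum ^ transitions es * class_prod es})"

definition essential_bounds :: "amap set set \<Rightarrow> tedge list \<Rightarrow> bool" where
  "essential_bounds L es \<longleftrightarrow> loop_class V E L \<and> essential V E L \<and> es \<noteq> [] \<and> in_class L (last es) \<and>
     (\<forall>g\<in>etgt (last es). rowvec es g \<in>
        {min_colsum ^ transitions es * class_prod_except L es * rowvec (piece L es) g..
         max_colsum ^ transitions es * class_prod_except L es * rowvec (piece L es) g})"

lemma transition_step:
  assumes bounds: "nonessential_bounds es" and path: "es @ [e] \<in> Omega E" and tr: "transition_edge e"
  shows "nonessential_bounds (es @ [e])"
proof -
  have e: "e \<in> E" and src: "end_vertex es = esrc e" and es: "set es \<subseteq> E"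
    using path Omega_edges by (auto simp: Omega_snoc)
  let ?P = "class_prod es" and ?t = "transitions es"
  have "rowvec (es @ [e]) h \<in>
      {min_colsum ^ Suc ?t * ?P..max_colsum ^ Suc ?t * ?P}" if h: "h \<in> etgt e" for h
  proof -
    have "rowvec (es @ [e]) h \<in>
        {min_colsum ^ ?t * ?P * colsum e h..max_colsum ^ ?t * ?P * colsum e h}"
      using sum_mult_bounds[of "esrc e" "rowvec es" "min_colsum ^ ?t * ?P" "\<lambda>_. 1"
          "max_colsum ^ ?t * ?P" "\<lambda>g. emat e g h"]
        bounds src e es emat_nonneg rowvec_snoc[OF es e]
      by (auto simp: nonessential_bounds_def colsum_def end_vertex_def split: if_splits)
    moreover have "0 \<le> min_colsum ^ ?t * ?P" and "0 \<le> max_colsum ^ ?t * ?P"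
      using min_colsum_pos one_le_max_colsum class_prod_nonneg[OF es] by auto
    ultimately show ?thesis
      using colsum_bounds[OF e h] mult_left_mono[of min_colsum "colsum e h" "min_colsum ^ ?t * ?P"]
        mult_left_mono[of "colsum e h" max_colsum "max_colsum ^ ?t * ?P"]
      by (auto simp: mult_ac)
  qed
  moreover have "\<not> essential_edge e"
    using tr by (auto simp: transition_edge_def essential_edge_def)
  ultimately show ?thesis
    using bounds tr class_prod_snoc_transition[OF tr]
    by (auto simp: nonessential_bounds_def transitions_def)
qed

lemma transitions_snoc_in_class:
  "loop_class V E L \<Longrightarrow> in_class L e \<Longrightarrow> transitions (es @ [e]) = transitions es"
  by (auto simp: transitions_def transition_edge_def)

lemma piece_joins:
  assumes path: "es @ [e] \<in> Omega E" and L: "loop_class V E L" "in_class L e"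
  shows "piece L es = [] \<or> etgt (last (piece L es)) = esrc e"
proof (cases "piece L es = []")
  case False
  then obtain e' where "e' \<in> set es" "in_class L e'"
    by (auto simp: piece_eq_filter filter_empty_conv)
  then have "in_class L (last es)" and "es \<noteq> []"
    using last_in_class[OF _ L] path by (auto simp: Omega_def)
  then show ?thesis
    using path by (simp add: piece_eq_filter last_filter Omega_snoc end_vertex_def)
qed simp

lemma rowvec_snoc_singleton:
  assumes "set es \<subseteq> E" and "e \<in> E" and "esrc e = {u}" and "es = [] \<or> etgt (last es) = {u}"
  shows "rowvec (es @ [e]) w = rowvec es u * emat e u w"
  using rowvec_snoc[OF assms(1,2)] assms(3,4) by auto

lemma pnorm_snoc_singleton:
  assumes "set es \<subseteq> E" and "e \<in> E" and "esrc e = {u}" and "etgt e = {w}"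
    and "es = [] \<or> etgt (last es) = {u}"
  shows "pnorm (es @ [e]) = pnorm es * emat e u w"
  using rowvec_snoc_singleton[OF assms(1-3,5)] pnorm_eq_rowvec_singleton[OF assms(5)]
    pnorm_eq_rowvec_singleton[of "es @ [e]" w] assms(4) by simp

lemma singleton_step:
  assumes bounds: "nonessential_bounds es" and path: "es @ [e] \<in> Omega E"
    and L: "loop_class V E L" "\<not> essential V E L" "in_class L e" and single: "\<forall>v\<in>L. card v = 1"
  shows "nonessential_bounds (es @ [e])"
proof -
  have e: "e \<in> E" and src: "end_vertex es = esrc e" and es: "set es \<subseteq> E"
    using path Omega_edges by (auto simp: Omega_snoc)
  have "card (esrc e) = 1" and "card (etgt e) = 1"
    using L(3) single by (auto simp: in_class_def)
  then obtain u w where u: "esrc e = {u}" and w: "etgt e = {w}"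
    by (meson card_1_singletonE)
  let ?s = "emat e u w"
  have "pnorm (piece L es @ [e]) = pnorm (piece L es) * ?s"
    using piece_joins[OF path L(1,3)] es u w
    by (intro pnorm_snoc_singleton[OF _ e]) (auto simp: piece_def)
  then have prod: "class_prod (es @ [e]) = class_prod es * ?s"
    using class_prod_split[OF L(1)] class_prod_except_snoc[OF L(1,3)] L(3) by (simp add: piece_eq_filter)
  have row: "rowvec (es @ [e]) w = rowvec es u * ?s"
    using src u by (intro rowvec_snoc_singleton[OF es e u]) (auto simp: end_vertex_def split: if_splits)
  have "\<not> essential_edge e"
    using L loop_class_unique by (auto simp: essential_edge_def in_class_def)
  moreover have "rowvec es u * ?s \<in>
      {min_colsum ^ transitions es * class_prod es * ?s..max_colsum ^ transitions es * class_prod es * ?s}"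
    using bounds src u emat_nonneg[OF e] by (auto simp: nonessential_bounds_def intro: mult_right_mono)
  ultimately show ?thesis
    using bounds w prod row transitions_snoc_in_class[OF L(1,3)]
    by (simp add: nonessential_bounds_def mult.assoc)
qed

lemma essential_step:
  assumes path: "es @ [e] \<in> Omega E"
    and L: "loop_class V E L" "essential V E L" "in_class L e"
    and bounds: "\<forall>g\<in>esrc e. rowvec es g \<in>
        {min_colsum ^ transitions es * class_prod_except L es * rowvec (piece L es) g..
         max_colsum ^ transitions es * class_prod_except L es * rowvec (piece L es) g}"
  shows "essential_bounds L (es @ [e])"
proof -
  have e: "e \<in> E" and src: "end_vertex es = esrc e" and es: "set es \<subseteq> E"
    using path Omega_edges by (auto simp: Omega_snoc)
  have es_joins: "es = [] \<or> etgt (last es) = esrc e"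
    using src unfolding end_vertex_def by (cases "es = []") simp_all
  have piece: "set (piece L es) \<subseteq> E"
    using es by (auto simp: piece_def)
  have "piece L (es @ [e]) = piece L es @ [e]"
    using L(3) by (simp add: piece_eq_filter)
  moreover have "rowvec (es @ [e]) h \<in>
      {min_colsum ^ transitions es * class_prod_except L es * rowvec (piece L es @ [e]) h..
       max_colsum ^ transitions es * class_prod_except L es * rowvec (piece L es @ [e]) h}" for h
    unfolding rowvec_snoc[OF es e es_joins] rowvec_snoc[OF piece e piece_joins[OF path L(1,3)]]
    using bounds emat_nonneg[OF e] by (intro sum_mult_bounds) simp_all
  ultimately show ?thesis
    using L class_prod_except_snoc[OF L(1,3)] transitions_snoc_in_class[OF L(1,3)]
    unfolding essential_bounds_def by simp
qed

lemma enter_essential: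
  assumes bounds: "nonessential_bounds es" and path: "es @ [e] \<in> Omega E"
    and L: "loop_class V E L" "essential V E L" "in_class L e"
  shows "essential_bounds L (es @ [e])"
proof (rule essential_step[OF path L])
  have empty: "piece L es = []"
    using bounds L(1,2)
    by (auto simp: nonessential_bounds_def essential_edge_def piece_eq_filter filter_empty_conv)
  then have "class_prod_except L es = class_prod es"
    using class_prod_split[OF L(1), of es] by (simp add: pnorm_def)
  moreover have "esrc e = end_vertex es"
    using path by (simp add: Omega_snoc)
  ultimately show "\<forall>g\<in>esrc e. rowvec es g \<in>
      {min_colsum ^ transitions es * class_prod_except L es * rowvec (piece L es) g..
       max_colsum ^ transitions es * class_prod_except L es * rowvec (piece L es) g}"
    using bounds empty by (simp add: nonessential_bounds_def rowvec_def)
qed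

lemma stay_essential:
  assumes bounds: "essential_bounds L es" and path: "es @ [e] \<in> Omega E"
  shows "essential_bounds L (es @ [e])"
proof -
  have L: "loop_class V E L" "essential V E L" and last: "es \<noteq> []" "in_class L (last es)"
    using bounds by (simp_all add: essential_bounds_def)
  have e: "e \<in> E" and src: "etgt (last es) = esrc e"
    using path last(1) by (simp_all add: Omega_snoc end_vertex_def)
  have "in_class L e"
    using essential_class_edge[OF L(2) e] src last(2) by (simp add: in_class_def)
  then show ?thesis
    using bounds src by (intro essential_step[OF path L]) (simp_all add: essential_bounds_def)
qed

lemma path_bounds:
  assumes single: "\<forall>L. loop_class V E L \<and> \<not> essential V E L \<longrightarrow> (\<forall>v\<in>L. card v = 1)"
  shows "es \<in> Omega E \<Longrightarrow> nonessential_bounds es \<or> (\<exists>L. essential_bounds L es)"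
proof (induction es rule: rev_induct)
  case Nil
  have "class_prod [] = 1"
    by (simp add: class_prod_def pnorm_def piece_def)
  then show ?case
    by (simp add: nonessential_bounds_def transitions_def rowvec_def)
next
  case (snoc e es)
  then have IH: "nonessential_bounds es \<or> (\<exists>L. essential_bounds L es)"
    by (simp add: Omega_snoc)
  show ?case
  proof (cases "\<exists>L. essential_bounds L es")
    case True
    then show ?thesis
      using stay_essential snoc.prems by blast
  next
    case False
    then have bounds: "nonessential_bounds es"
      using IH by blast
    show ?thesis
    proof (cases "transition_edge e")
      case True
      then show ?thesis
        using transition_step[OF bounds snoc.prems] by blast
    next
      case False
      then obtain L where L: "loop_class V E L" "in_class L e"
        by (auto simp: transition_edge_def)
      then show ?thesis
        using enter_essential[OF bounds snoc.prems L(1)] singleton_step[OF bounds snoc.prems L(1)] single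
        by blast
    qed
  qed
qed

lemma end_vertex_Omega:
  assumes "es \<in> Omega E"
  shows "finite (end_vertex es)" and "end_vertex es \<noteq> {}" and "card (end_vertex es) \<le> max_card"
proof -
  have "end_vertex es = {id} \<or> end_vertex es \<in> V"
  proof (cases "es = []")
    case False
    then have "last es \<in> E"
      using Omega_edges[OF assms] last_in_set by blast
    then show ?thesis
      using edge_vertices False by (simp add: end_vertex_def)
  qed (simp add: end_vertex_def)
  then show "finite (end_vertex es)" and "end_vertex es \<noteq> {}" and "card (end_vertex es) \<le> max_card"
    using finite_vertex nonempty_vertex card_le_max_card one_le_max_card by auto
qed

lemma pnorm_eq_sum_end_vertex: "pnorm es = (\<Sum>g\<in>end_vertex es. rowvec es g)"
  using pnorm_eq_sum_rowvec[of es] by (cases "es = []") (simp_all add: end_vertex_def pnorm_def rowvec_def)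

lemma pnorm_nonessential_bounds:
  assumes bounds: "nonessential_bounds es" and path: "es \<in> Omega E"
  shows "pnorm es \<in> {min_colsum ^ transitions es * class_prod es..
    max_card * (max_colsum ^ transitions es * class_prod es)}"
proof -
  let ?b = "max_colsum ^ transitions es * class_prod es"
  have row: "\<forall>g\<in>end_vertex es. rowvec es g \<in> {min_colsum ^ transitions es * class_prod es..?b}"
    using bounds by (simp add: nonessential_bounds_def)
  obtain g0 where "g0 \<in> end_vertex es"
    using end_vertex_Omega(2)[OF path] by blast
  then have "min_colsum ^ transitions es * class_prod es \<le> pnorm es"
    unfolding pnorm_eq_sum_end_vertex using row end_vertex_Omega(1)[OF path] rowvec_nonneg[OF Omega_edges[OF path]]
    by (intro order_trans[OF _ member_le_sum[of g0]]) auto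
  moreover have "pnorm es \<le> card (end_vertex es) * ?b"
    unfolding pnorm_eq_sum_end_vertex using row sum_mono[of "end_vertex es" "rowvec es" "\<lambda>_. ?b"] by simp
  moreover have "card (end_vertex es) * ?b \<le> max_card * ?b"
    using end_vertex_Omega(3)[OF path] one_le_max_colsum class_prod_nonneg[OF Omega_edges[OF path]]
    by (intro mult_right_mono) auto
  ultimately show ?thesis
    by simp
qed

lemma pnorm_essential_bounds:
  assumes bounds: "essential_bounds L es" and path: "es \<in> Omega E"
  shows "pnorm es \<in> {min_colsum ^ transitions es * class_prod es..
    max_card * (max_colsum ^ transitions es * class_prod es)}"
proof -
  let ?t = "transitions es" and ?P = "class_prod es" and ?Q = "class_prod_except L es"
  have L: "loop_class V E L" and last: "es \<noteq> []" "in_class L (last es)"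
    and row: "\<forall>g\<in>etgt (last es). rowvec es g \<in>
      {min_colsum ^ ?t * ?Q * rowvec (piece L es) g..max_colsum ^ ?t * ?Q * rowvec (piece L es) g}"
    using bounds by (simp_all add: essential_bounds_def)
  have "last (piece L es) = last es" and "piece L es \<noteq> []"
    using last last_in_set by (simp_all add: piece_eq_filter last_filter filter_empty_conv) blast
  then have "?P = (\<Sum>g\<in>etgt (last es). ?Q * rowvec (piece L es) g)"
    using class_prod_split[OF L] pnorm_eq_sum_rowvec[of "piece L es"]
    by (simp add: sum_distrib_left mult.commute)
  then have "pnorm es \<in> {min_colsum ^ ?t * ?P..max_colsum ^ ?t * ?P}"
    unfolding pnorm_eq_sum_rowvec[OF last(1)] using row by (simp add: sum_distrib_left mult.assoc sum_mono)
  moreover have "max_colsum ^ ?t * ?P \<le> max_card * (max_colsum ^ ?t * ?P)"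
    using one_le_max_card one_le_max_colsum class_prod_nonneg[OF Omega_edges[OF path]]
      mult_right_mono[of 1 "real max_card" "max_colsum ^ ?t * ?P"]
    by simp
  ultimately show ?thesis
    by auto
qed

lemma one_le_max_card_mult_power: "1 \<le> max_card * max_colsum ^ n"
  using mult_mono[of 1 "real max_card" 1 "max_colsum ^ n"] one_le_max_card one_le_max_colsum
  by (simp add: one_le_power)

lemma pnorm_bounds:
  assumes single: "\<forall>L. loop_class V E L \<and> \<not> essential V E L \<longrightarrow> (\<forall>v\<in>L. card v = 1)"
    and path: "es \<in> Omega E"
  shows "pnorm es \<in> {min_colsum ^ card V * class_prod es..max_card * max_colsum ^ card V * class_prod es}"
proof -
  let ?t = "transitions es" and ?P = "class_prod es"
  have t: "?t \<le> card V"
    using path by (intro transitions_le_card) (simp add: Omega_def)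
  have P: "0 \<le> ?P"
    using class_prod_nonneg[OF Omega_edges[OF path]] .
  have "pnorm es \<in> {min_colsum ^ ?t * ?P..max_card * (max_colsum ^ ?t * ?P)}"
    using path_bounds[OF single path] pnorm_nonessential_bounds pnorm_essential_bounds path by blast
  moreover have "min_colsum ^ card V * ?P \<le> min_colsum ^ ?t * ?P"
    using min_colsum_pos min_colsum_le_1 t P by (intro mult_right_mono power_decreasing) auto
  moreover have "max_card * (max_colsum ^ ?t * ?P) \<le> max_card * (max_colsum ^ card V * ?P)"
    using one_le_max_colsum t P by (intro mult_left_mono mult_right_mono power_increasing) auto
  ultimately show ?thesis
    by (simp add: mult.assoc)
qed

theorem decomposable_if_nonessential_classes_singleton:
  assumes "\<forall>L. loop_class V E L \<and> \<not> essential V E L \<longrightarrow> (\<forall>v\<in>L. card v = 1)"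
  shows "decomposable V E"
proof -
  define C where "C = max (1 / min_colsum ^ card V) (max_card * max_colsum ^ card V)"
  have "inverse C \<le> inverse (inverse (min_colsum ^ card V))"
    using min_colsum_pos by (intro le_imp_inverse_le) (simp_all add: C_def field_simps)
  then have lower: "1 / C \<le> min_colsum ^ card V"
    by (simp add: inverse_eq_divide)
  have "1 \<le> C"
    using one_le_max_card_mult_power[of "card V"] unfolding C_def by linarith
  moreover have "class_prod es / C \<le> pnorm es \<and> pnorm es \<le> C * class_prod es" if "es \<in> Omega E" for es
  proof -
    have P: "0 \<le> class_prod es"
      using that by (intro class_prod_nonneg Omega_edges)
    have "class_prod es / C \<le> min_colsum ^ card V * class_prod es"
      using mult_right_mono[OF lower P] by simp
    moreover have "max_card * max_colsum ^ card V * class_prod es \<le> C * class_prod es"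
      using P by (intro mult_right_mono) (simp_all add: C_def)
    ultimately show ?thesis
      using pnorm_bounds[OF assms that] by simp
  qed
  ultimately show ?thesis
    unfolding decomposable_def class_prod_def by blast
qed

end

lemma amap_comp: "amap a b \<circ> amap c e = amap (a * c) (a * e + b)"
  by (auto simp: amap_def algebra_simps)

lemma affine_bij_comp: "h \<in> affine_bij \<Longrightarrow> h' \<in> affine_bij \<Longrightarrow> h \<circ> h' \<in> affine_bij"
  unfolding affine_bij_def by (fastforce simp: amap_comp)

lemma id_affine_bij: "id \<in> affine_bij"
proof -
  have "id = amap 1 0"
    by (auto simp: amap_def)
  then show ?thesis
    by (auto simp: affine_bij_def)
qed

lemma open_vimage_affine_bij: "h \<in> affine_bij \<Longrightarrow> open U \<Longrightarrow> open (h -` U)"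
  unfolding affine_bij_def amap_def by (auto intro!: open_vimage continuous_intros)

lemma Tint_affine_bij: "fst J < snd J \<Longrightarrow> Tint J \<in> affine_bij"
  by (auto simp: Tint_def affine_bij_def)

lemma Tinv_affine_bij: "fst J < snd J \<Longrightarrow> Tinv J \<in> affine_bij"
  by (auto simp: Tinv_def affine_bij_def)

lemma Tinv_apply: "Tinv (a, b) x = (x - a) / (b - a)"
  by (simp add: Tinv_def amap_def diff_divide_distrib)

lemma Tint_Tinv: "a < b \<Longrightarrow> Tint (a, b) (Tinv (a, b) x) = x"
  by (simp add: Tint_def amap_def Tinv_apply)

lemma Tinv_mem_unit_interval: "x \<in> {a<..<b} \<Longrightarrow> Tinv (a, b) x \<in> {0<..<1}"
  by (auto simp: Tinv_apply divide_less_eq)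

lemma Sw_Nil [simp]: "Sw r d [] = id"
  by (simp add: Sw_def)

lemma Sw_Cons [simp]: "Sw r d (i # w) = Smap r d i \<circ> Sw r d w"
  by (simp add: Sw_def)

lemma Sw_append: "Sw r d (u @ w) = Sw r d u \<circ> Sw r d w"
  by (induction u) auto

lemma Sw_diff: "Sw r d w x - Sw r d w y = prod_list (map r w) * (x - y)"
proof (induction w)
  case (Cons i w)
  have "Sw r d (i # w) x - Sw r d (i # w) y = r i * (Sw r d w x - Sw r d w y)"
    by (simp add: Smap_def amap_def algebra_simps)
  then show ?case
    using Cons by simp
qed simp

lemma pw_Nil [simp]: "pw p [] = 1"
  by (simp add: pw_def)

lemma pw_Cons [simp]: "pw p (i # w) = p i * pw p w"
  by (simp add: pw_def)

lemma abs_prod_list_le: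
  fixes r :: "'i \<Rightarrow> real"
  shows "(\<forall>i\<in>set w. \<bar>r i\<bar> \<le> \<rho>) \<Longrightarrow> \<bar>prod_list (map r w)\<bar> \<le> \<rho> ^ length w"
proof (induction w)
  case (Cons i w)
  then show ?case
    by (auto simp: abs_mult intro!: mult_mono order_trans[OF abs_ge_zero])
qed simp

section \<open>Support of the self-similar measure\<close>

locale wifs =
  fixes I :: "'i set" and r d p :: "'i \<Rightarrow> real" and K :: "real set"
    and \<mu> :: "real measure" and \<Phi> :: "amap set \<Rightarrow> amap \<Rightarrow> 'i list set"
  assumes finite_index: "finite I" and nonempty_index: "I \<noteq> {}"
    and contracting: "\<forall>i\<in>I. 0 < \<bar>r i\<bar> \<and> \<bar>r i\<bar> < 1"
    and weights_pos: "\<forall>i\<in>I. 0 < p i"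
    and attractor: "K = (\<Union>i\<in>I. Smap r d i ` K)"
    and attractor_nonempty: "K \<noteq> {}" and attractor_not_singleton: "\<not> (\<exists>x. K = {x})"
    and attractor_hull: "convex hull K = {0..1}"
    and prob: "prob_space \<mu>" and sets_mu: "sets \<mu> = sets borel"
    and self_similar: "\<forall>A \<in> sets borel. measure \<mu> A = (\<Sum>i\<in>I. p i * measure \<mu> (Smap r d i -` A))"
    and rule: "iteration_rule I r d K \<Phi>"
begin

lemma attractor_subset: "K \<subseteq> {0..1}"
  using hull_subset[of K convex] attractor_hull by simp

lemma Smap_affine_bij: "i \<in> I \<Longrightarrow> Smap r d i \<in> affine_bij"
  using contracting by (auto simp: Smap_def affine_bij_def)

lemma Sw_affine_bij: "w \<in> lists I \<Longrightarrow> Sw r d w \<in> affine_bij"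
  by (induction w) (auto simp: id_affine_bij Smap_affine_bij affine_bij_comp)

lemma Sw_attractor: "w \<in> lists I \<Longrightarrow> k \<in> K \<Longrightarrow> Sw r d w k \<in> K"
  using attractor by (induction w arbitrary: k) auto

lemma attractor_words: "x \<in> K \<Longrightarrow> \<exists>w\<in>lists I. length w = n \<and> (\<exists>k\<in>K. x = Sw r d w k)"
proof (induction n)
  case 0
  then show ?case
    by (intro bexI[of _ "[]"]) auto
next
  case (Suc n)
  then obtain w k where w: "w \<in> lists I" "length w = n" "k \<in> K" "x = Sw r d w k"
    by blast
  then obtain i k' where "i \<in> I" "k' \<in> K" "k = Smap r d i k'"
    using attractor by blast
  with w show ?case
    by (intro bexI[of _ "w @ [i]"]) (auto simp: Sw_append)
qed

lemma pw_pos: "w \<in> lists I \<Longrightarrow> 0 < pw p w"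
  using weights_pos by (induction w) auto

lemma measure_vimage_Sw_le:
  "w \<in> lists I \<Longrightarrow> A \<in> sets borel \<Longrightarrow> pw p w * measure \<mu> (Sw r d w -` A) \<le> measure \<mu> A"
proof (induction w arbitrary: A)
  case (Cons i w)
  have i: "i \<in> I" and w: "w \<in> lists I"
    using Cons.prems by auto
  have "Smap r d i \<in> borel_measurable borel"
    by (auto simp: Smap_def amap_def intro!: borel_measurable_continuous_onI continuous_intros)
  then have A': "Smap r d i -` A \<in> sets borel"
    using Cons.prems(2) measurable_sets_borel by blast
  have "pw p (i # w) * measure \<mu> (Sw r d (i # w) -` A)
      = p i * (pw p w * measure \<mu> (Sw r d w -` (Smap r d i -` A)))"
    by (simp add: vimage_comp mult.assoc)
  also have "\<dots> \<le> p i * measure \<mu> (Smap r d i -` A)"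
    using Cons.IH[OF w A'] weights_pos i by (intro mult_left_mono) auto
  also have "\<dots> \<le> (\<Sum>j\<in>I. p j * measure \<mu> (Smap r d j -` A))"
    using finite_index i weights_pos by (intro member_le_sum) auto
  also have "\<dots> = measure \<mu> A"
    using self_similar Cons.prems(2) by simp
  finally show ?case .
qed simp

lemma bounded_interval_measure_pos: "\<exists>R::nat. 0 < measure \<mu> {- real R..real R}"
proof (rule ccontr)
  interpret prob_space \<mu>
    by (rule prob)
  assume "\<nexists>R::nat. 0 < measure \<mu> {- real R..real R}"
  then have "{- real R..real R} \<in> null_sets \<mu>" for R :: nat
    using sets_mu measure_nonneg[of \<mu> "{- real R..real R}"]
    by (auto simp: null_sets_def emeasure_eq_measure not_less intro: antisym)
  then have "(\<Union>R::nat. {- real R..real R}) \<in> null_sets \<mu>"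
    by blast
  moreover have "(\<Union>R::nat. {- real R..real R}) = space \<mu>"
  proof -
    have "x \<in> (\<Union>R::nat. {- real R..real R})" for x :: real
      using real_arch_simple[of "\<bar>x\<bar>"] by (force simp: abs_le_iff)
    then show ?thesis
      using sets_eq_imp_space_eq[OF sets_mu] by auto
  qed
  ultimately show False
    using emeasure_space_1 by (simp add: null_sets_def)
qed

lemma contraction_bound: "\<exists>\<rho><1. \<forall>i\<in>I. \<bar>r i\<bar> \<le> \<rho>"
proof (intro exI conjI)
  show "Max (abs ` r ` I) < 1"
    using finite_index nonempty_index contracting by (subst Max_less_iff) auto
  show "\<forall>i\<in>I. \<bar>r i\<bar> \<le> Max (abs ` r ` I)"
    using finite_index by auto
qed

text \<open>A deep enough cylinder map \<open>S\<^sub>w\<close> around a point of \<open>K\<close> squeezes an interval of positive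
  mass into \<open>U\<close>.\<close>
lemma measure_pos_open:
  assumes U: "open U" and x: "x \<in> K" "x \<in> U"
  shows "0 < measure \<mu> U"
proof -
  obtain \<delta> where \<delta>: "0 < \<delta>" "ball x \<delta> \<subseteq> U"
    using U x open_contains_ball by blast
  obtain R :: nat where R: "0 < measure \<mu> {- real R..real R}"
    using bounded_interval_measure_pos by blast
  obtain \<rho> where \<rho>: "\<rho> < 1" "\<forall>i\<in>I. \<bar>r i\<bar> \<le> \<rho>"
    using contraction_bound by blast
  obtain n where n: "\<rho> ^ n < \<delta> / (real R + 1)"
    using real_arch_pow_inv[OF _ \<rho>(1), of "\<delta> / (real R + 1)"] \<delta>(1) by auto
  obtain w k where w: "w \<in> lists I" "length w = n" "k \<in> K" "x = Sw r d w k"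
    using attractor_words[OF x(1)] by blast
  have prod_le: "\<bar>prod_list (map r w)\<bar> \<le> \<rho> ^ n"
    using w(1,2) \<rho>(2) abs_prod_list_le[of w r \<rho>] by auto
  have dist_le: "\<bar>z - k\<bar> \<le> real R + 1" if "z \<in> {- real R..real R}" for z
    using that w(3) attractor_subset by (auto simp: abs_le_iff subset_iff)
  have "\<bar>Sw r d w z - x\<bar> < \<delta>" if "z \<in> {- real R..real R}" for z
  proof -
    have "\<bar>Sw r d w z - x\<bar> = \<bar>prod_list (map r w)\<bar> * \<bar>z - k\<bar>"
      using w(4) by (simp add: Sw_diff abs_mult)
    also have "\<dots> \<le> \<rho> ^ n * (real R + 1)"
      using prod_le dist_le[OF that] by (intro mult_mono) auto
    also have "\<dots> < \<delta>"
      using n by (simp add: pos_less_divide_eq)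
    finally show ?thesis .
  qed
  then have sub: "{- real R..real R} \<subseteq> Sw r d w -` U"
    using \<delta>(2) by (force simp: dist_real_def abs_minus_commute)
  have meas: "Sw r d w -` U \<in> sets \<mu>"
    using open_vimage_affine_bij[OF Sw_affine_bij[OF w(1)] U] sets_mu by simp
  interpret prob_space \<mu>
    by (rule prob)
  have "0 < pw p w * measure \<mu> {- real R..real R}"
    using pw_pos[OF w(1)] R by simp
  also have "\<dots> \<le> pw p w * measure \<mu> (Sw r d w -` U)"
    using finite_measure_mono[OF sub meas] pw_pos[OF w(1)] by simp
  also have "\<dots> \<le> measure \<mu> U"
    using measure_vimage_Sw_le[OF w(1)] U by simp
  finally show ?thesis .
qed

lemma attractor_meets_unit_interval: "K \<inter> {0<..<1} \<noteq> {}"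
proof
  assume "K \<inter> {0<..<1} = {}"
  then have "K \<subseteq> {0, 1}"
    using attractor_subset by fastforce
  moreover have "K \<noteq> {0}" and "K \<noteq> {1}"
    using attractor_not_singleton by auto
  ultimately have K: "K = {0, 1}"
    using attractor_nonempty by blast
  obtain i where i: "i \<in> I"
    using nonempty_index by blast
  then have "Smap r d i 0 \<in> K" and "Smap r d i 1 \<in> K"
    using Sw_attractor[of "[i]"] K by auto
  then have "\<bar>r i\<bar> = 0 \<or> \<bar>r i\<bar> = 1"
    using K by (auto simp: Smap_def amap_def)
  then show False
    using contracting i by auto
qed

section \<open>Net intervals and neighbour sets\<close>

lemma rule_cut:
  assumes "finite v" and "v \<subseteq> affine_bij" and "f \<in> v"
  shows "finite (\<Phi> v f)" and "\<Phi> v f \<subseteq> lists I"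
    and "\<exists>N. \<forall>n\<ge>N. \<forall>w\<in>lists I. length w = n \<longrightarrow> (\<exists>!u. u \<in> \<Phi> v f \<and> prefix u w)"
  using conjunct1[OF rule[unfolded iteration_rule_def], rule_format, OF conjI[OF assms(1) conjI[OF assms(2,3)]]]
  by blast+

lemma attractor_rule_cut:
  assumes "finite v" and "v \<subseteq> affine_bij" and "f \<in> v" and "x \<in> K"
  shows "\<exists>\<tau>\<in>\<Phi> v f. \<exists>k\<in>K. x = Sw r d \<tau> k"
proof -
  obtain N where N: "\<forall>n\<ge>N. \<forall>w\<in>lists I. length w = n \<longrightarrow> (\<exists>!u. u \<in> \<Phi> v f \<and> prefix u w)"
    using rule_cut(3)[OF assms(1-3)] by blast
  obtain w k where w: "w \<in> lists I" "length w = N" "k \<in> K" "x = Sw r d w k"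
    using attractor_words[OF assms(4)] by blast
  obtain u where "u \<in> \<Phi> v f" "prefix u w"
    using N w(1,2) by blast
  then obtain z where u: "u \<in> \<Phi> v f" "w = u @ z"
    by (auto simp: prefix_def)
  then have "x = Sw r d u (Sw r d z k)" and "Sw r d z k \<in> K"
    using w Sw_attractor by (auto simp: Sw_append)
  then show ?thesis
    using u(1) by blast
qed

lemma finite_Ymaps: "finite v \<Longrightarrow> v \<subseteq> affine_bij \<Longrightarrow> finite (Ymaps r d \<Phi> \<Delta> v)"
proof -
  assume v: "finite v" "v \<subseteq> affine_bij"
  have "Ymaps r d \<Phi> \<Delta> v = (\<lambda>(f, \<tau>). Tint \<Delta> \<circ> f \<circ> Sw r d \<tau>) ` (SIGMA f:v. \<Phi> v f)"
    unfolding Ymaps_def by auto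
  then show ?thesis
    using v rule_cut(1) by auto
qed

text \<open>Positivity of \<open>\<mu>(h\<^sup>-\<^sup>1(0,1))\<close> keeps the denominators in \<open>rawmat\<close> away from the junk
  value \<open>x / 0 = 0\<close>; the covering clause makes neighbour sets nonempty.\<close>
definition regular_pair :: "npair \<Rightarrow> bool" where
  "regular_pair c \<longleftrightarrow> fst (fst c) < snd (fst c) \<and> finite (snd c) \<and> snd c \<noteq> {} \<and> snd c \<subseteq> affine_bij \<and>
     (\<forall>h\<in>snd c. 0 < measure \<mu> (h -` {0<..<1})) \<and>
     (\<forall>x\<in>K \<inter> {fst (fst c)<..<snd (fst c)}. \<exists>h\<in>snd c. \<exists>k\<in>K. x = Tint (fst c) (h k))"

lemma rchildrenE:
  assumes "c' \<in> rchildren r d \<Phi> K c"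
  obtains y y' where
    "c' = ((y, y'), {Tinv (y, y') \<circ> g | g. g \<in> Ymaps r d \<Phi> (fst c) (snd c) \<and> g ` K \<inter> {y<..<y'} \<noteq> {}})"
    "y \<in> cutpts r d \<Phi> (fst c) (snd c)" "y' \<in> cutpts r d \<Phi> (fst c) (snd c)" "y < y'"
    "{y<..<y'} \<inter> K \<noteq> {}"
  using assms unfolding rchildren_def by blast

lemma Ymaps_affine_bij:
  assumes "regular_pair c" and "g \<in> Ymaps r d \<Phi> (fst c) (snd c)"
  shows "g \<in> affine_bij"
proof -
  obtain f \<tau> where g: "g = Tint (fst c) \<circ> f \<circ> Sw r d \<tau>" "f \<in> snd c" "\<tau> \<in> \<Phi> (snd c) f"
    using assms(2) by (auto simp: Ymaps_def)
  then have "\<tau> \<in> lists I"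
    using rule_cut(2)[of "snd c" f] assms(1) by (auto simp: regular_pair_def)
  then show ?thesis
    using g assms(1) Tint_affine_bij[of "fst c"] Sw_affine_bij
    by (auto simp: regular_pair_def intro!: affine_bij_comp)
qed

lemma Ymaps_cover:
  assumes reg: "regular_pair c" and x: "x \<in> K \<inter> {fst (fst c)<..<snd (fst c)}"
  shows "\<exists>g\<in>Ymaps r d \<Phi> (fst c) (snd c). \<exists>k\<in>K. g k = x"
proof -
  obtain f k where f: "f \<in> snd c" "k \<in> K" "x = Tint (fst c) (f k)"
    using reg x unfolding regular_pair_def by blast
  then obtain \<tau> k' where \<tau>: "\<tau> \<in> \<Phi> (snd c) f" "k' \<in> K" "k = Sw r d \<tau> k'"
    using attractor_rule_cut[of "snd c" f k] reg by (auto simp: regular_pair_def)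
  then have "Tint (fst c) \<circ> f \<circ> Sw r d \<tau> \<in> Ymaps r d \<Phi> (fst c) (snd c)"
    using f(1) by (auto simp: Ymaps_def)
  moreover have "(Tint (fst c) \<circ> f \<circ> Sw r d \<tau>) k' = x"
    using f \<tau> by simp
  ultimately show ?thesis
    using \<tau>(2) by blast
qed

lemma rchild_regular:
  assumes reg: "regular_pair c" and child: "c' \<in> rchildren r d \<Phi> K c"
  shows "regular_pair c'"
proof -
  obtain y y' where y: "y \<in> cutpts r d \<Phi> (fst c) (snd c)" "y' \<in> cutpts r d \<Phi> (fst c) (snd c)"
    and yy: "y < y'" and meets: "{y<..<y'} \<inter> K \<noteq> {}"
    and c': "c' = ((y, y'), {Tinv (y, y') \<circ> g | g. g \<in> Ymaps r d \<Phi> (fst c) (snd c) \<and> g ` K \<inter> {y<..<y'} \<noteq> {}})"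
    using child by (rule rchildrenE)
  define Y where "Y = {g \<in> Ymaps r d \<Phi> (fst c) (snd c). g ` K \<inter> {y<..<y'} \<noteq> {}}"
  have v': "snd c' = (\<lambda>g. Tinv (y, y') \<circ> g) ` Y"
    using c' by (auto simp: Y_def)
  have Y_affine: "Y \<subseteq> affine_bij"
    using Ymaps_affine_bij[OF reg] by (auto simp: Y_def)
  have "finite Y"
    using finite_Ymaps reg by (auto simp: Y_def regular_pair_def)
  then have "finite (snd c')"
    using v' by simp
  moreover have affine: "snd c' \<subseteq> affine_bij"
    using v' Y_affine Tinv_affine_bij[of "(y, y')"] yy by (auto intro: affine_bij_comp)
  moreover have "\<forall>h\<in>snd c'. 0 < measure \<mu> (h -` {0<..<1})"
  proof
    fix h assume h: "h \<in> snd c'"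
    obtain g where "h = Tinv (y, y') \<circ> g" "g ` K \<inter> {y<..<y'} \<noteq> {}"
      using h v' by (auto simp: Y_def)
    then obtain k where "h = Tinv (y, y') \<circ> g" "k \<in> K" "g k \<in> {y<..<y'}"
      by blast
    then have "k \<in> K \<inter> h -` {0<..<1}"
      using Tinv_mem_unit_interval by auto
    then show "0 < measure \<mu> (h -` {0<..<1})"
      using h affine by (intro measure_pos_open open_vimage_affine_bij) auto
  qed
  moreover have cover: "\<exists>h\<in>snd c'. \<exists>k\<in>K. x = Tint (y, y') (h k)" if x: "x \<in> K \<inter> {y<..<y'}" for x
  proof -
    have "cutpts r d \<Phi> (fst c) (snd c) \<subseteq> {fst (fst c)..snd (fst c)}"
      using reg by (auto simp: cutpts_def regular_pair_def)
    then have "x \<in> K \<inter> {fst (fst c)<..<snd (fst c)}"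
      using x y by auto
    then obtain g k where "g \<in> Ymaps r d \<Phi> (fst c) (snd c)" "k \<in> K" "g k = x"
      using Ymaps_cover[OF reg] by blast
    then show ?thesis
      using v' x Tint_Tinv[OF yy] by (force simp: Y_def)
  qed
  moreover have "snd c' \<noteq> {}"
    using meets cover by blast
  moreover have "fst c' = (y, y')"
    using c' by simp
  ultimately show ?thesis
    using yy cover unfolding regular_pair_def by auto
qed

lemma root_regular: "regular_pair ((0, 1), {id})"
proof -
  have "0 < measure \<mu> {0<..<1::real}"
    using attractor_meets_unit_interval by (auto intro: measure_pos_open)
  then show ?thesis
    by (auto simp: regular_pair_def id_affine_bij Tint_def amap_def)
qed

lemma is_chain_Cons:
  assumes "is_chain r d \<Phi> K (c # cs)" and "cs \<noteq> []"
  shows "is_chain r d \<Phi> K cs" and "same_step r d \<Phi> K c (hd cs)"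
proof -
  have steps: "same_step r d \<Phi> K ((c # cs) ! i) ((c # cs) ! Suc i)" if "Suc i < length (c # cs)" for i
    using assms(1) that by (simp add: is_chain_def)
  show "same_step r d \<Phi> K c (hd cs)"
    using steps[of 0] assms(2) by (simp add: hd_conv_nth)
  show "is_chain r d \<Phi> K cs"
    using assms steps[of "Suc _"] by (simp add: is_chain_def)
qed

fun raw_chain :: "npair \<Rightarrow> npair list \<Rightarrow> bool" where
  "raw_chain c [] \<longleftrightarrow> True"
| "raw_chain c (c' # cs) \<longleftrightarrow> c' \<in> rchildren r d \<Phi> K c \<and> raw_chain c' cs"

lemma is_chain_raw_chain:
  "is_chain r d \<Phi> K ch \<Longrightarrow> hd ch \<in> rchildren r d \<Phi> K c \<Longrightarrow> raw_chain c ch"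
proof (induction ch arbitrary: c)
  case (Cons c' cs)
  show ?case
  proof (cases "cs = []")
    case False
    then have "is_chain r d \<Phi> K cs" and "hd cs \<in> rchildren r d \<Phi> K c'"
      using is_chain_Cons[OF Cons.prems(1)] by (auto simp: same_step_def)
    then show ?thesis
      using Cons by simp
  qed (use Cons.prems in simp)
qed simp

lemma raw_chain_regular: "raw_chain c ch \<Longrightarrow> regular_pair c \<Longrightarrow> c' \<in> set ch \<Longrightarrow> regular_pair c'"
proof (induction ch arbitrary: c)
  case (Cons c1 cs)
  then have "regular_pair c1"
    using rchild_regular by simp
  then show ?case
    using Cons.IH[of c1] Cons.prems by auto
qed simp

lemma gen_regular: "c \<in> gen r d \<Phi> K n \<Longrightarrow> regular_pair c"
proof (induction n arbitrary: c)
  case 0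
  then show ?case
    using root_regular by simp
next
  case (Suc n)
  then obtain c0 ch where c0: "c0 \<in> gen r d \<Phi> K n" and c: "c = last ch"
    and ch: "is_chain r d \<Phi> K ch" "hd ch \<in> rchildren r d \<Phi> K c0"
    by (auto simp: children_def)
  have "last ch \<in> set ch"
    using ch(1) by (simp add: is_chain_def)
  then show ?case
    using raw_chain_regular[OF is_chain_raw_chain[OF ch] Suc.IH[OF c0]] c by blast
qed

lemma rawmat_nonneg:
  assumes "regular_pair c"
  shows "0 \<le> rawmat \<mu> p r d \<Phi> c c' f g"
proof (cases "f \<in> snd c")
  case True
  then have "\<Phi> (snd c) f \<subseteq> lists I"
    using rule_cut(2)[of "snd c" f] assms by (simp add: regular_pair_def)
  then have "0 \<le> (\<Sum>\<omega> \<in> {\<omega> \<in> \<Phi> (snd c) f. Tint (fst c) \<circ> f \<circ> Sw r d \<omega> = Tint (fst c') \<circ> g}. pw p \<omega>)"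
    by (intro sum_nonneg less_imp_le pw_pos) blast
  then show ?thesis
    by (simp add: rawmat_def)
qed (simp add: rawmat_def)

lemma rawmat_pos:
  assumes reg: "regular_pair c" and child: "c' \<in> rchildren r d \<Phi> K c" and g: "g \<in> snd c'"
  shows "\<exists>f\<in>snd c. 0 < rawmat \<mu> p r d \<Phi> c c' f g"
proof -
  obtain y y' where c': "c' = ((y, y'), {Tinv (y, y') \<circ> g | g. g \<in> Ymaps r d \<Phi> (fst c) (snd c) \<and> g ` K \<inter> {y<..<y'} \<noteq> {}})"
    and yy: "y < y'"
    using child by (rule rchildrenE)
  then obtain f \<tau> where f: "f \<in> snd c" "\<tau> \<in> \<Phi> (snd c) f"
    and g_eq: "g = Tinv (y, y') \<circ> (Tint (fst c) \<circ> f \<circ> Sw r d \<tau>)"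
    using g by (auto simp: Ymaps_def)
  define S where "S = {\<omega> \<in> \<Phi> (snd c) f. Tint (fst c) \<circ> f \<circ> Sw r d \<omega> = Tint (fst c') \<circ> g}"
  have cut: "finite (\<Phi> (snd c) f)" "\<Phi> (snd c) f \<subseteq> lists I"
    using rule_cut[of "snd c" f] reg f(1) by (auto simp: regular_pair_def)
  have "\<tau> \<in> S"
    using f(2) c' yy Tint_Tinv[OF yy] by (simp add: S_def g_eq fun_eq_iff)
  then have "0 < (\<Sum>\<omega>\<in>S. pw p \<omega>)"
    using cut by (intro sum_pos2[of _ \<tau>] pw_pos less_imp_le) (auto simp: S_def)
  moreover have "0 < measure \<mu> (f -` {0<..<1})" and "0 < measure \<mu> (g -` {0<..<1})"
    using reg rchild_regular[OF reg child] f(1) g by (auto simp: regular_pair_def)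
  ultimately show ?thesis
    using f(1) g by (intro bexI[of _ f]) (simp_all add: rawmat_def S_def)
qed

lemma chainmat_nonneg: "raw_chain c ch \<Longrightarrow> regular_pair c \<Longrightarrow> 0 \<le> chainmat \<mu> p r d \<Phi> c ch f h"
proof (induction ch arbitrary: c f h)
  case (Cons c' cs)
  then have "regular_pair c'"
    using rchild_regular by simp
  then show ?case
    using Cons rawmat_nonneg by (simp add: mmul_nonneg)
qed (simp add: idm_nonneg)

lemma chainmat_pos:
  "raw_chain c ch \<Longrightarrow> regular_pair c \<Longrightarrow> h \<in> snd (last (c # ch)) \<Longrightarrow>
    \<exists>f\<in>snd c. 0 < chainmat \<mu> p r d \<Phi> c ch f h"
proof (induction ch arbitrary: c)
  case Nil
  then show ?case
    by (auto simp: idm_def)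
next
  case (Cons c' cs)
  have child: "c' \<in> rchildren r d \<Phi> K c" and reg': "regular_pair c'" and chain: "raw_chain c' cs"
    using Cons.prems rchild_regular by auto
  obtain g where g: "g \<in> snd c'" "0 < chainmat \<mu> p r d \<Phi> c' cs g h"
    using Cons.IH[OF chain reg'] Cons.prems(3) by auto
  obtain f where f: "f \<in> snd c" "0 < rawmat \<mu> p r d \<Phi> c c' f g"
    using rawmat_pos[OF Cons.prems(2) child g(1)] by blast
  have "0 < mmul (snd c') (rawmat \<mu> p r d \<Phi> c c') (chainmat \<mu> p r d \<Phi> c' cs) f h"
    using reg' g f rawmat_nonneg[OF Cons.prems(2)] chainmat_nonneg[OF chain reg']
    by (intro mmul_pos) (auto simp: regular_pair_def)
  then show ?case
    using f(1) by auto
qed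

lemma tedgesE:
  assumes "e \<in> tedges \<mu> p r d \<Phi> K"
  obtains n c ch where "c \<in> gen r d \<Phi> K n" "is_chain r d \<Phi> K ch" "hd ch \<in> rchildren r d \<Phi> K c"
    "esrc e = snd c" "etgt e = snd (last ch)"
    "emat e = (\<lambda>f g. if f \<in> snd c \<and> g \<in> snd (last ch) then chainmat \<mu> p r d \<Phi> c ch f g else 0)"
  using assms unfolding tedges_def esrc_def etgt_def emat_def by auto

lemma tverts_regular: "v \<in> tverts r d \<Phi> K \<Longrightarrow> \<exists>c. regular_pair c \<and> v = snd c"
  unfolding tverts_def using gen_regular by blast

lemma weighted_graph_transition_graph:
  assumes "Phi_FNC \<mu> p r d \<Phi> K"
  shows "weighted_graph (tverts r d \<Phi> K) (tedges \<mu> p r d \<Phi> K)"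
proof
  fix e assume "e \<in> tedges \<mu> p r d \<Phi> K"
  then obtain n c ch where c: "c \<in> gen r d \<Phi> K n" and ch: "is_chain r d \<Phi> K ch" "hd ch \<in> rchildren r d \<Phi> K c"
    and src: "esrc e = snd c" and tgt: "etgt e = snd (last ch)"
    and mat: "emat e = (\<lambda>f g. if f \<in> snd c \<and> g \<in> snd (last ch) then chainmat \<mu> p r d \<Phi> c ch f g else 0)"
    by (rule tedgesE)
  have reg: "regular_pair c" and chain: "raw_chain c ch"
    using gen_regular[OF c] is_chain_raw_chain[OF ch] .
  have "last ch \<in> gen r d \<Phi> K (Suc n)"
    using c ch by (auto simp: children_def)
  then show "esrc e \<in> tverts r d \<Phi> K \<and> etgt e \<in> tverts r d \<Phi> K"
    using c src tgt unfolding tverts_def by blast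
  show "0 \<le> emat e f g" for f g
    using chainmat_nonneg[OF chain reg] by (simp add: mat)
  show "emat e f g \<noteq> 0 \<Longrightarrow> f \<in> esrc e \<and> g \<in> etgt e" for f g
    by (simp add: mat src tgt split: if_splits)
  show "0 < colsum e g" if g: "g \<in> etgt e" for g
  proof -
    have "last (c # ch) = last ch"
      using ch(1) by (simp add: is_chain_def)
    then obtain f where f: "f \<in> snd c" "0 < chainmat \<mu> p r d \<Phi> c ch f g"
      using chainmat_pos[OF chain reg] g tgt by auto
    have "emat e f g \<le> colsum e g"
      unfolding colsum_def using reg f(1) chainmat_nonneg[OF chain reg]
      by (intro member_le_sum) (auto simp: src mat regular_pair_def)
    then show ?thesis
      using f g by (simp add: mat tgt)
  qed
qed (use assms tverts_regular in \<open>auto simp: Phi_FNC_def regular_pair_def\<close>)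

end

theorem lemma4p10:
  fixes I :: "'i set" and r d p :: "'i \<Rightarrow> real" and K :: "real set"
    and \<mu> :: "real measure" and \<Phi> :: "amap set \<Rightarrow> amap \<Rightarrow> 'i list set"
  assumes "finite I" and "I \<noteq> {}"
    and "\<forall>i\<in>I. 0 < \<bar>r i\<bar> \<and> \<bar>r i\<bar> < 1"
    and "\<forall>i\<in>I. 0 < p i" and "(\<Sum>i\<in>I. p i) = 1"
    and "compact K" and "K \<noteq> {}" and "K = (\<Union>i\<in>I. Smap r d i ` K)"
    and "\<not> (\<exists>x. K = {x})" and "convex hull K = {0..1}"
    and "prob_space \<mu>" and "sets \<mu> = sets borel"
    and "\<forall>E \<in> sets borel. measure \<mu> E = (\<Sum>i\<in>I. p i * measure \<mu> (Smap r d i -` E))"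
    and "iteration_rule I r d K \<Phi>"
    and "Phi_FNC \<mu> p r d \<Phi> K"
    and "\<forall>L. loop_class (tverts r d \<Phi> K) (tedges \<mu> p r d \<Phi> K) L
              \<and> \<not> essential (tverts r d \<Phi> K) (tedges \<mu> p r d \<Phi> K) L
              \<longrightarrow> (\<forall>v\<in>L. card v = 1)"
  shows "decomposable (tverts r d \<Phi> K) (tedges \<mu> p r d \<Phi> K)"
proof -
  interpret wifs I r d p K \<mu> \<Phi>
    using assms unfolding wifs_def by blast
  interpret weighted_graph "tverts r d \<Phi> K" "tedges \<mu> p r d \<Phi> K"
    using weighted_graph_transition_graph assms(15) .
  show ?thesis
    using decomposable_if_nonessential_classes_singleton assms(16) .
qed

end
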